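(* Let $k$ be an algebraically closed field of characteristic zero. Let $Y=\operatorname{Spec} B$ and $T=\operatorname{Spec} R$ be irreducible affine varieties over $k$, let $f : Y\to T$ be a dominant morphism whose general fibers are irreducible and reduced, regard $R\subset B$ via $f^*$, and let $D$ be an $R$-trivial derivation of $B$ such that for each closed point $t\in T$ with maximal ideal $\mathfrak m$, the induced derivation $D\otimes_R R/\mathfrak m$ of $B\otimes_R R/\mathfrak m$ is locally nilpotent. Then there exist a subfield $k_0\subset k$ which is a finitely generated field extension of $\mathbb Q$, geometrically integral affine $k_0$-varieties $Y_0=\operatorname{Spec} B_0$ and $T_0=\operatorname{Spec} R_0$, a dominant morphism $f_0 : Y_0\to T_0$ and an $R_0$-trivial derivation $D_0$ of $B_0$ such that: (1) $Y_0,T_0,f_0,D_0$ are defined over $k_0$; (2) $Y=Y_0\otimes_{k_0}k$, $T=T_0\otimes_{k_0}k$, $f=f_0\otimes_{k_0}k$ and $D=D_0\otimes_{k_0}k$; (3) $D_0$ is locally nilpotent if and only if $D$ is locally nilpotent.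
   Context: A derivation $\delta$ of a ring $A$ is locally nilpotent if for every $a\in A$ some power $\delta^n(a)=0$. An $R$-trivial derivation of $B$ is a derivation vanishing on $R$. *)

theory Defs
  imports "HOL-Computational_Algebra.Polynomial"
begin

text \<open>All rings are realised as subsets of one ambient integral domain 'b,
which plays the role of the coordinate ring B of Y.\<close>

inductive_set ring_closure :: "'a::comm_ring_1 set \<Rightarrow> 'a set" for A where
  rc_base: "x \<in> A \<Longrightarrow> x \<in> ring_closure A"
| rc_one: "1 \<in> ring_closure A"
| rc_neg: "x \<in> ring_closure A \<Longrightarrow> - x \<in> ring_closure A"
| rc_add: "x \<in> ring_closure A \<Longrightarrow> y \<in> ring_closure A \<Longrightarrow> x + y \<in> ring_closure A"
| rc_mult: "x \<in> ring_closure A \<Longrightarrow> y \<in> ring_closure A \<Longrightarrow> x * y \<in> ring_closure A"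

text \<open>Smallest subset closed under ring operations and under taking inverses
(where they exist): for A inside a subfield this is the subfield generated by A
(over the prime field, which is Q in characteristic zero).\<close>
inductive_set field_closure :: "'a::comm_ring_1 set \<Rightarrow> 'a set" for A where
  fc_base: "x \<in> A \<Longrightarrow> x \<in> field_closure A"
| fc_one: "1 \<in> field_closure A"
| fc_neg: "x \<in> field_closure A \<Longrightarrow> - x \<in> field_closure A"
| fc_add: "x \<in> field_closure A \<Longrightarrow> y \<in> field_closure A \<Longrightarrow> x + y \<in> field_closure A"
| fc_mult: "x \<in> field_closure A \<Longrightarrow> y \<in> field_closure A \<Longrightarrow> x * y \<in> field_closure A"
| fc_inv: "x \<in> field_closure A \<Longrightarrow> x * y = 1 \<Longrightarrow> y \<in> field_closure A"

definition is_subring :: "'a::comm_ring_1 set \<Rightarrow> bool" where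
  "is_subring A \<longleftrightarrow> 1 \<in> A \<and> (\<forall>x\<in>A. \<forall>y\<in>A. x + y \<in> A \<and> x * y \<in> A \<and> - x \<in> A)"

definition is_subfield :: "'a::comm_ring_1 set \<Rightarrow> bool" where
  "is_subfield F \<longleftrightarrow> is_subring F \<and> (\<forall>x\<in>F. x \<noteq> 0 \<longrightarrow> (\<exists>y\<in>F. x * y = 1))"

definition alg_closed_subfield :: "'a::comm_ring_1 set \<Rightarrow> bool" where
  "alg_closed_subfield k \<longleftrightarrow> is_subfield k \<and>
     (\<forall>p :: 'a poly. (\<forall>i. coeff p i \<in> k) \<and> degree p \<ge> 1 \<longrightarrow> (\<exists>x\<in>k. poly p x = 0))"

definition fin_gen_algebra :: "'a::comm_ring_1 set \<Rightarrow> 'a set \<Rightarrow> bool" where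
  "fin_gen_algebra k A \<longleftrightarrow> (\<exists>S. finite S \<and> A = ring_closure (k \<union> S))"

definition fin_gen_field_over_Q :: "'a::comm_ring_1 set \<Rightarrow> bool" where
  "fin_gen_field_over_Q k0 \<longleftrightarrow> is_subfield k0 \<and> (\<exists>S. finite S \<and> k0 = field_closure S)"

definition is_derivation :: "('a::comm_ring_1 \<Rightarrow> 'a) \<Rightarrow> bool" where
  "is_derivation D \<longleftrightarrow> (\<forall>x y. D (x + y) = D x + D y \<and> D (x * y) = x * D y + D x * y)"

definition locally_nilpotent_on :: "'a::comm_ring_1 set \<Rightarrow> ('a \<Rightarrow> 'a) \<Rightarrow> bool" where
  "locally_nilpotent_on A D \<longleftrightarrow> (\<forall>a\<in>A. \<exists>n. (D ^^ n) a = 0)"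

definition ideal_of :: "'a::comm_ring_1 set \<Rightarrow> 'a set \<Rightarrow> bool" where
  "ideal_of R I \<longleftrightarrow> I \<subseteq> R \<and> 0 \<in> I \<and> (\<forall>x\<in>I. \<forall>y\<in>I. x + y \<in> I \<and> - x \<in> I)
      \<and> (\<forall>r\<in>R. \<forall>x\<in>I. r * x \<in> I)"

definition maximal_ideal_of :: "'a::comm_ring_1 set \<Rightarrow> 'a set \<Rightarrow> bool" where
  "maximal_ideal_of R m \<longleftrightarrow> ideal_of R m \<and> m \<noteq> R \<and>
     (\<forall>J. ideal_of R J \<and> m \<subseteq> J \<longrightarrow> J = m \<or> J = R)"

inductive_set ext_ideal :: "'a::comm_ring_1 set \<Rightarrow> 'a set" for I where
  ei_zero: "0 \<in> ext_ideal I"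
| ei_gen: "a \<in> I \<Longrightarrow> b * a \<in> ext_ideal I"
| ei_add: "x \<in> ext_ideal I \<Longrightarrow> y \<in> ext_ideal I \<Longrightarrow> x + y \<in> ext_ideal I"

text \<open>The fiber ring B \<otimes>_R R/m = B/mB is an integral domain
(fiber irreducible and reduced).\<close>
definition fiber_integral :: "'a::comm_ring_1 set \<Rightarrow> bool" where
  "fiber_integral m \<longleftrightarrow> ext_ideal m \<noteq> UNIV \<and>
     (\<forall>x y. x * y \<in> ext_ideal m \<longrightarrow> x \<in> ext_ideal m \<or> y \<in> ext_ideal m)"

text \<open>The induced derivation on B/mB is locally nilpotent.\<close>
definition fiber_LND :: "('a::comm_ring_1 \<Rightarrow> 'a) \<Rightarrow> 'a set \<Rightarrow> bool" where
  "fiber_LND D m \<longleftrightarrow> (\<forall>b. \<exists>n. (D ^^ n) b \<in> ext_ideal m)"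

definition lin_indep_over :: "'a::comm_ring_1 set \<Rightarrow> 'a set \<Rightarrow> bool" where
  "lin_indep_over F S \<longleftrightarrow> (\<forall>c. (\<forall>s\<in>S. c s \<in> F) \<and> (\<Sum>s\<in>S. c s * s) = 0 \<longrightarrow> (\<forall>s\<in>S. c s = 0))"

definition lin_disjoint :: "'a::comm_ring_1 set \<Rightarrow> 'a set \<Rightarrow> 'a set \<Rightarrow> bool" where
  "lin_disjoint k0 A K \<longleftrightarrow>
     (\<forall>S. finite S \<and> S \<subseteq> A \<and> lin_indep_over k0 S \<longrightarrow> lin_indep_over K S)"

text \<open>C = A \<otimes>_{k0} k, realised inside the ambient ring: the multiplication map
A \<otimes>_{k0} k \<rightarrow> C is injective (linear disjointness) and surjective.\<close>
definition base_change :: "'a::comm_ring_1 set \<Rightarrow> 'a set \<Rightarrow> 'a set \<Rightarrow> 'a set \<Rightarrow> bool" where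
  "base_change k0 A k C \<longleftrightarrow> k0 \<subseteq> A \<and> k0 \<subseteq> k \<and> lin_disjoint k0 A k \<and> C = ring_closure (A \<union> k)"

end

theory Submission
  imports Defs
begin

text \<open>Choose generators G of B over k and order the power products of G degree-lexicographically.
  The standard power products, those that are not k-combinations of smaller ones, form a k-basis
  of B, and by Dickson's lemma all power products are reduced to standard ones using the
  coefficients of finitely many reductions. Adjoining these coefficients, together with those
  expressing D(G) and generators of R in that basis, to the prime field gives k0. Then
  B0 = k0[G] is spanned over k0 by the standard power products, which remain independent over k,
  so B0 is linearly disjoint from k and B = B0 \<otimes> k. Since D maps B0 into itself and kills k,
  it is locally nilpotent on B exactly when it is on B0.\<close>

lemma subring_zero: "is_subring K \<Longrightarrow> 0 \<in> K"
  unfolding is_subring_def by (metis add.right_inverse)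

lemma subring_sum:
  assumes "is_subring K" "\<forall>s\<in>S. f s \<in> K"
  shows "sum f S \<in> K"
  using assms(2)
proof (induction S rule: infinite_finite_induct)
  case (insert x S) then show ?case using assms(1) unfolding is_subring_def by simp
qed (simp_all add: subring_zero[OF assms(1)])

lemma subfield_inverse:
  "is_subfield F \<Longrightarrow> x \<in> F \<Longrightarrow> x \<noteq> 0 \<Longrightarrow> \<exists>y\<in>F. x * y = 1"
  unfolding is_subfield_def by blast

lemma ring_closure_least:
  assumes "is_subring S" "A \<subseteq> S"
  shows "ring_closure A \<subseteq> S"
proof
  fix x assume "x \<in> ring_closure A"
  then show "x \<in> S"
    by (induction rule: ring_closure.induct) (use assms in \<open>auto simp: is_subring_def\<close>)
qed

lemma ring_closure_subring: "is_subring (ring_closure A)"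
  unfolding is_subring_def by (simp add: rc_one rc_neg rc_add rc_mult)

lemma ring_closure_mono: "A \<subseteq> B \<Longrightarrow> ring_closure A \<subseteq> ring_closure B"
  by (rule ring_closure_least[OF ring_closure_subring]) (blast intro: rc_base)

lemma field_closure_least:
  fixes k :: "'a::idom set"
  assumes k: "is_subfield k" and X: "X \<subseteq> k"
  shows "field_closure X \<subseteq> k"
proof
  fix x assume "x \<in> field_closure X"
  then show "x \<in> k"
  proof (induction rule: field_closure.induct)
    case (fc_inv x y)
    then obtain z where "z \<in> k" "x * z = 1" using k subfield_inverse by fastforce
    moreover have "y = z" using fc_inv.hyps(2) \<open>x * z = 1\<close> by (metis mult.left_commute mult_1_right)
    ultimately show ?case by simp
  qed (use k X in \<open>auto simp: is_subfield_def is_subring_def\<close>)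
qed

lemma field_closure_subfield:
  fixes k :: "'a::idom set"
  assumes k: "is_subfield k" and X: "X \<subseteq> k"
  shows "is_subfield (field_closure X)"
  unfolding is_subfield_def is_subring_def
proof (intro conjI ballI impI)
  fix x assume x: "x \<in> field_closure X" "x \<noteq> 0"
  then obtain y where "x * y = 1"
    using field_closure_least[OF k X] subfield_inverse[OF k] by blast
  then show "\<exists>y\<in>field_closure X. x * y = 1" using fc_inv[OF x(1)] by blast
qed (simp_all add: fc_one fc_add fc_mult fc_neg)

lemma derivation_zero: "is_derivation D \<Longrightarrow> D 0 = 0"
  unfolding is_derivation_def by (metis add_cancel_left_left add_0)

lemma derivation_one: "is_derivation D \<Longrightarrow> D 1 = 0"
  unfolding is_derivation_def by (metis add_cancel_left_right mult_1_left mult_1_right)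

lemma derivation_minus: "is_derivation D \<Longrightarrow> D (- x) = - D x"
  unfolding is_derivation_def
  by (metis add.right_inverse add_eq_0_iff derivation_zero is_derivation_def)

lemma funpow_derivation_zero: "is_derivation D \<Longrightarrow> (D ^^ n) 0 = 0"
  by (induction n) (simp_all add: derivation_zero)

lemma funpow_derivation_add: "is_derivation D \<Longrightarrow> (D ^^ n) (x + y) = (D ^^ n) x + (D ^^ n) y"
  by (induction n) (simp_all add: is_derivation_def)

lemma funpow_derivation_minus: "is_derivation D \<Longrightarrow> (D ^^ n) (- x) = - (D ^^ n) x"
  by (induction n) (simp_all add: derivation_minus)

lemma funpow_derivation_eq_0_mono:
  assumes "is_derivation D" "(D ^^ n) x = 0" "n \<le> m"
  shows "(D ^^ m) x = 0"
proof -
  have "(D ^^ m) x = (D ^^ (m - n)) ((D ^^ n) x)"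
    using assms(3) by (metis funpow_add le_add_diff_inverse2 o_apply)
  then show ?thesis using assms funpow_derivation_zero by simp
qed

lemma funpow_derivation_mult_eq_0:
  assumes D: "is_derivation D" and "(D ^^ n) x = 0" "(D ^^ m) y = 0"
  shows "(D ^^ (n + m)) (x * y) = 0"
  using assms(2,3)
proof (induction "n + m" arbitrary: n m x y)
  case 0 then show ?case by simp
next
  case (Suc N)
  show ?case
  proof (cases "n = 0 \<or> m = 0")
    case True
    then show ?thesis using Suc.prems funpow_derivation_zero[OF D] by auto
  next
    case False
    then obtain n' m' where n': "n = Suc n'" and m': "m = Suc m'" by (metis not0_implies_Suc)
    have "(D ^^ (n + m)) (x * y) = (D ^^ N) (x * D y + D x * y)"
      using D Suc.hyps(2) unfolding is_derivation_def
      by (metis funpow_Suc_right o_apply)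
    also have "\<dots> = (D ^^ (n + m')) (x * D y) + (D ^^ (n' + m)) (D x * y)"
      using Suc.hyps(2) n' m' by (simp add: funpow_derivation_add[OF D] del: funpow.simps)
    also have "\<dots> = 0"
    proof -
      have "(D ^^ m') (D y) = 0" "(D ^^ n') (D x) = 0"
        using Suc.prems n' m' by (metis funpow_Suc_right o_apply)+
      moreover have "N = n + m'" "N = n' + m" using Suc.hyps(2) n' m' by simp_all
      ultimately have "(D ^^ (n + m')) (x * D y) = 0" "(D ^^ (n' + m)) (D x * y) = 0"
        using Suc.hyps(1) Suc.prems by blast+
      then show ?thesis by simp
    qed
    finally show ?thesis .
  qed
qed

lemma locally_nilpotent_on_ring_closure:
  assumes D: "is_derivation D" and "\<forall>x\<in>K. D x = 0" and "locally_nilpotent_on A D"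
  shows "locally_nilpotent_on (ring_closure (A \<union> K)) D"
  unfolding locally_nilpotent_on_def
proof
  fix a assume "a \<in> ring_closure (A \<union> K)"
  then show "\<exists>n. (D ^^ n) a = 0"
  proof (induction rule: ring_closure.induct)
    case (rc_base x)
    then show ?case using assms(2,3) unfolding locally_nilpotent_on_def
      by (metis UnE funpow_Suc_right o_apply funpow_derivation_zero[OF D])
  next
    case rc_one
    have "(D ^^ 1) 1 = 0" using derivation_one[OF D] by simp
    then show ?case by blast
  next
    case (rc_neg x)
    then show ?case using funpow_derivation_minus[OF D] by (metis neg_equal_0_iff_equal)
  next
    case (rc_add x y)
    then obtain n m where "(D ^^ n) x = 0" "(D ^^ m) y = 0" by blast
    then have "(D ^^ (n + m)) x = 0" "(D ^^ (n + m)) y = 0"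
      using funpow_derivation_eq_0_mono[OF D] by auto
    then show ?case by (metis add_0 funpow_derivation_add[OF D])
  next
    case (rc_mult x y)
    then show ?case using funpow_derivation_mult_eq_0[OF D] by blast
  qed
qed

lemma derivation_image_ring_closure:
  assumes D: "is_derivation D" and S: "is_subring S" "A \<subseteq> S" and DA: "D ` A \<subseteq> S"
  shows "D ` ring_closure A \<subseteq> S"
proof
  fix y assume "y \<in> D ` ring_closure A"
  then obtain x where "x \<in> ring_closure A" "y = D x" by blast
  moreover have "D x \<in> S" using \<open>x \<in> ring_closure A\<close>
  proof (induction rule: ring_closure.induct)
    case rc_one then show ?case using derivation_one[OF D] subring_zero[OF S(1)] by simp
  next
    case (rc_neg x) then show ?case using derivation_minus[OF D] S(1) unfolding is_subring_def by simp
  next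
    case (rc_add x y) then show ?case using D S(1) unfolding is_subring_def is_derivation_def by simp
  next
    case (rc_mult x y)
    have "x \<in> S" "y \<in> S" using rc_mult.hyps ring_closure_least[OF S] by blast+
    then show ?case using rc_mult.IH D S(1) unfolding is_subring_def is_derivation_def by simp
  qed (use DA in blast)
  ultimately show "y \<in> S" by simp
qed

inductive_set lin_span :: "'a::comm_ring_1 set \<Rightarrow> 'a set \<Rightarrow> 'a set" for F X where
  lin_span_zero: "0 \<in> lin_span F X"
| lin_span_smult: "c \<in> F \<Longrightarrow> x \<in> X \<Longrightarrow> c * x \<in> lin_span F X"
| lin_span_add: "a \<in> lin_span F X \<Longrightarrow> b \<in> lin_span F X \<Longrightarrow> a + b \<in> lin_span F X"

lemma lin_span_base: "1 \<in> F \<Longrightarrow> x \<in> X \<Longrightarrow> x \<in> lin_span F X"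
  using lin_span_smult[of 1 F x X] by simp

lemma lin_span_mono:
  assumes "F \<subseteq> F'" "X \<subseteq> X'" shows "lin_span F X \<subseteq> lin_span F' X'"
proof
  fix x assume "x \<in> lin_span F X"
  then show "x \<in> lin_span F' X'"
    by induction (use assms in \<open>auto intro: lin_span.intros\<close>)
qed

lemma lin_span_scale:
  assumes "is_subring F" "c \<in> F" "x \<in> lin_span F X"
  shows "c * x \<in> lin_span F X"
  using assms(3)
proof induction
  case (lin_span_smult d x)
  have "c * d \<in> F" using assms lin_span_smult unfolding is_subring_def by blast
  then have "(c * d) * x \<in> lin_span F X" using lin_span_smult(2) by (rule lin_span.lin_span_smult)
  then show ?case by (simp add: mult.assoc)
qed (simp_all add: distrib_left lin_span.intros)

lemma lin_span_subset:
  assumes "is_subring F" "X \<subseteq> lin_span F Y"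
  shows "lin_span F X \<subseteq> lin_span F Y"
proof
  fix x assume "x \<in> lin_span F X"
  then show "x \<in> lin_span F Y"
    by induction (use assms lin_span_scale in \<open>blast intro: lin_span.intros\<close>)+
qed

lemma lin_span_mult_left:
  assumes "x \<in> lin_span F X"
  shows "y * x \<in> lin_span F ((*) y ` X)"
  using assms
proof induction
  case (lin_span_smult c x)
  then have "c * (y * x) \<in> lin_span F ((*) y ` X)" by (intro lin_span.lin_span_smult) auto
  then show ?case by (simp add: ac_simps)
qed (simp_all add: distrib_left lin_span.intros)

lemma lin_span_mult:
  assumes F: "is_subring F" and X: "\<forall>x\<in>X. \<forall>y\<in>X. x * y \<in> X"
    and "x \<in> lin_span F X" "y \<in> lin_span F X"
  shows "x * y \<in> lin_span F X"
  using assms(3)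
proof induction
  case (lin_span_smult c x)
  have "x * y \<in> lin_span F ((*) x ` X)" by (rule lin_span_mult_left[OF assms(4)])
  also have "\<dots> \<subseteq> lin_span F X" using X lin_span_smult by (intro lin_span_mono) auto
  finally show ?case using lin_span_scale[OF F lin_span_smult(1)] by (simp add: mult.assoc)
qed (simp_all add: distrib_right lin_span.intros)

lemma sum_in_lin_span:
  assumes "\<forall>t\<in>T. a t \<in> F" "T \<subseteq> X"
  shows "(\<Sum>t\<in>T. a t * t) \<in> lin_span F X"
  using assms
  by (induction T rule: infinite_finite_induct) (auto intro: lin_span.intros)

lemma lin_span_sum_repr:
  assumes F: "is_subring F" and "x \<in> lin_span F X"
  shows "\<exists>T a. finite T \<and> T \<subseteq> X \<and> (\<forall>t\<in>T. a t \<in> F) \<and> (\<Sum>t\<in>T. a t * t) = x"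
  using assms(2)
proof induction
  case lin_span_zero
  show ?case by (rule exI[of _ "{}"]) simp
next
  case (lin_span_smult c x)
  then show ?case by (intro exI[of _ "{x}"] exI[of _ "\<lambda>_. c"]) simp
next
  case (lin_span_add x y)
  then obtain T1 a1 T2 a2 where
    rep: "finite T1" "T1 \<subseteq> X" "\<forall>t\<in>T1. a1 t \<in> F" "(\<Sum>t\<in>T1. a1 t * t) = x"
         "finite T2" "T2 \<subseteq> X" "\<forall>t\<in>T2. a2 t \<in> F" "(\<Sum>t\<in>T2. a2 t * t) = y" by blast
  define a where "a t = (if t \<in> T1 then a1 t else 0) + (if t \<in> T2 then a2 t else 0)" for t
  have "(\<Sum>t\<in>T1 \<union> T2. a t * t) = (\<Sum>t\<in>T1 \<union> T2. if t \<in> T1 then a1 t * t else 0)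
      + (\<Sum>t\<in>T1 \<union> T2. if t \<in> T2 then a2 t * t else 0)"
    unfolding a_def sum.distrib[symmetric] by (rule sum.cong) (auto simp: distrib_right)
  also have "\<dots> = x + y"
    using rep by (simp add: sum.inter_restrict[symmetric] Int_absorb1)
  finally have "(\<Sum>t\<in>T1 \<union> T2. a t * t) = x + y" .
  moreover have "\<forall>t\<in>T1 \<union> T2. a t \<in> F"
    using rep F subring_zero[OF F] unfolding a_def is_subring_def by auto
  ultimately show ?case using rep by (intro exI[of _ "T1 \<union> T2"] exI[of _ a]) simp
qed

lemma lin_span_finite_coeffs:
  assumes "finite I" "\<forall>i\<in>I. x i \<in> lin_span K (X i)"
  shows "\<exists>C. finite C \<and> C \<subseteq> K \<and> (\<forall>i\<in>I. x i \<in> lin_span C (X i))"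
proof -
  have "\<exists>C. finite C \<and> C \<subseteq> K \<and> y \<in> lin_span C Y" if "y \<in> lin_span K Y" for y Y
    using that
  proof induction
    case lin_span_zero
    show ?case by (blast intro: lin_span.lin_span_zero)
  next
    case (lin_span_smult c x)
    then show ?case by (intro exI[of _ "{c}"]) (simp add: lin_span.lin_span_smult)
  next
    case (lin_span_add a b)
    then obtain C1 C2 where "finite C1" "C1 \<subseteq> K" "a \<in> lin_span C1 Y"
      "finite C2" "C2 \<subseteq> K" "b \<in> lin_span C2 Y" by blast
    moreover have "lin_span C1 Y \<subseteq> lin_span (C1 \<union> C2) Y" "lin_span C2 Y \<subseteq> lin_span (C1 \<union> C2) Y"
      by (intro lin_span_mono; simp)+
    ultimately show ?case by (intro exI[of _ "C1 \<union> C2"]) (auto intro: lin_span.lin_span_add)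
  qed
  then have "\<forall>i\<in>I. \<exists>C. finite C \<and> C \<subseteq> K \<and> x i \<in> lin_span C (X i)" using assms(2) by blast
  then obtain C where C: "\<forall>i\<in>I. finite (C i) \<and> C i \<subseteq> K \<and> x i \<in> lin_span (C i) (X i)"
    by (rule bchoice[THEN exE])
  have "\<forall>i\<in>I. x i \<in> lin_span (\<Union>(C ` I)) (X i)"
    using C lin_span_mono[of _ "\<Union>(C ` I)"] by blast
  then show ?thesis using C assms(1) by (intro exI[of _ "\<Union>(C ` I)"]) auto
qed

section \<open>Linear disjointness\<close>

lemma sum_pivot_combination:
  "(\<Sum>s\<in>S. c s * (p * a s t - a s t0 * b)) = p * (\<Sum>s\<in>S. c s * a s t) - b * (\<Sum>s\<in>S. c s * a s t0)"
  for a :: "'s \<Rightarrow> 't \<Rightarrow> 'a::comm_ring_1"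
proof -
  have "(\<Sum>s\<in>S. c s * (p * a s t - a s t0 * b)) = (\<Sum>s\<in>S. p * (c s * a s t) - b * (c s * a s t0))"
    by (rule sum.cong) (simp_all add: algebra_simps)
  then show ?thesis by (simp add: sum_subtractf sum_distrib_left)
qed

lemma pivot_elimination:
  fixes a :: "'s \<Rightarrow> 't \<Rightarrow> 'a::comm_ring_1"
  assumes "finite S" "s0 \<notin> S" "t0 \<in> T"
    and sol: "\<forall>t\<in>T. (\<Sum>s\<in>insert s0 S. c s * a s t) = 0"
  shows "\<forall>t\<in>T. (\<Sum>s\<in>S. c s * (a s0 t0 * a s t - a s t0 * a s0 t)) = 0"
proof
  fix t assume "t \<in> T"
  have row: "(\<Sum>s\<in>S. c s * a s u) = - (c s0 * a s0 u)" if "u \<in> T" for u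
    using sol that assms(1,2) by (simp add: eq_neg_iff_add_eq_0 add.commute)
  have "(\<Sum>s\<in>S. c s * (a s0 t0 * a s t - a s t0 * a s0 t))
      = a s0 t0 * (\<Sum>s\<in>S. c s * a s t) - a s0 t * (\<Sum>s\<in>S. c s * a s t0)"
    by (rule sum_pivot_combination)
  also have "\<dots> = 0" using row[OF \<open>t \<in> T\<close>] row[OF assms(3)] by (simp add: algebra_simps)
  finally show "(\<Sum>s\<in>S. c s * (a s0 t0 * a s t - a s t0 * a s0 t)) = 0" .
qed

lemma pivot_back_substitution:
  fixes a :: "'s \<Rightarrow> 't \<Rightarrow> 'a::idom"
  assumes "finite S" "s0 \<notin> S" "a s0 t0 * q = 1"
    and sol: "\<forall>t\<in>T. (\<Sum>s\<in>S. c s * (a s0 t0 * a s t - a s t0 * a s0 t)) = 0"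
  shows "\<forall>t\<in>T. (\<Sum>s\<in>insert s0 S. (c(s0 := - (q * (\<Sum>s\<in>S. c s * a s t0)))) s * a s t) = 0"
proof
  fix t assume "t \<in> T"
  have "(\<Sum>s\<in>S. (c(s0 := z)) s * a s t) = (\<Sum>s\<in>S. c s * a s t)" for z
    using assms(2) by (intro sum.cong) auto
  then have "a s0 t0 * (\<Sum>s\<in>insert s0 S. (c(s0 := - (q * (\<Sum>s\<in>S. c s * a s t0)))) s * a s t)
      = - (a s0 t0 * q) * (\<Sum>s\<in>S. c s * a s t0) * a s0 t + a s0 t0 * (\<Sum>s\<in>S. c s * a s t)"
    using assms(1,2) by (simp add: algebra_simps)
  also have "\<dots> = a s0 t0 * (\<Sum>s\<in>S. c s * a s t) - a s0 t * (\<Sum>s\<in>S. c s * a s t0)"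
    unfolding assms(3) by (simp add: algebra_simps)
  also have "\<dots> = (\<Sum>s\<in>S. c s * (a s0 t0 * a s t - a s t0 * a s0 t))"
    by (rule sum_pivot_combination[symmetric])
  finally have "a s0 t0 * (\<Sum>s\<in>insert s0 S. (c(s0 := - (q * (\<Sum>s\<in>S. c s * a s t0)))) s * a s t) = 0"
    using sol \<open>t \<in> T\<close> by simp
  moreover have "a s0 t0 \<noteq> 0" using assms(3) by auto
  ultimately show "(\<Sum>s\<in>insert s0 S. (c(s0 := - (q * (\<Sum>s\<in>S. c s * a s t0)))) s * a s t) = 0"
    by simp
qed

lemma homogeneous_system_solution_in_subfield:
  fixes a :: "'s \<Rightarrow> 't \<Rightarrow> 'a::idom"
  assumes F: "is_subfield F" and "finite S" "\<forall>s\<in>S. \<forall>t\<in>T. a s t \<in> F"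
    and "\<forall>t\<in>T. (\<Sum>s\<in>S. c s * a s t) = 0" "\<exists>s\<in>S. c s \<noteq> 0"
  shows "\<exists>c'. (\<forall>s\<in>S. c' s \<in> F) \<and> (\<exists>s\<in>S. c' s \<noteq> 0) \<and> (\<forall>t\<in>T. (\<Sum>s\<in>S. c' s * a s t) = 0)"
  using assms(2-)
proof (induction S arbitrary: a c rule: finite_induct)
  case empty then show ?case by simp
next
  case (insert s0 S)
  have F0: "0 \<in> F" and F1: "1 \<in> F" and Fring: "is_subring F"
    using F subring_zero unfolding is_subfield_def is_subring_def by blast+
  show ?case
  proof (cases "\<forall>t\<in>T. a s0 t = 0")
    case True
    have "\<forall>t\<in>T. (\<Sum>s\<in>insert s0 S. (\<lambda>s. if s = s0 then 1 else 0) s * a s t) = 0"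
      using True insert.hyps by (auto intro!: sum.neutral)
    then show ?thesis using F0 F1 by (intro exI[of _ "\<lambda>s. if s = s0 then 1 else 0"]) auto
  next
    case False
    then obtain t0 where t0: "t0 \<in> T" "a s0 t0 \<noteq> 0" by blast
    then obtain q where q: "q \<in> F" "a s0 t0 * q = 1"
      using subfield_inverse[OF F] insert.prems(1) by blast
    define a' where "a' s t = a s0 t0 * a s t - a s t0 * a s0 t" for s t
    have a'F: "\<forall>s\<in>S. \<forall>t\<in>T. a' s t \<in> F"
    proof (intro ballI)
      fix s t assume "s \<in> S" "t \<in> T"
      then have "a s0 t0 \<in> F" "a s t \<in> F" "a s t0 \<in> F" "a s0 t \<in> F"
        using insert.prems(1) t0(1) by auto
      then show "a' s t \<in> F"
        using Fring unfolding a'_def is_subring_def diff_conv_add_uminus by metis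
    qed
    have reduced: "\<forall>t\<in>T. (\<Sum>s\<in>S. c s * a' s t) = 0"
      unfolding a'_def by (rule pivot_elimination[OF insert.hyps t0(1) insert.prems(2)])
    show ?thesis
    proof (cases "\<exists>s\<in>S. c s \<noteq> 0")
      case True
      obtain c'' where c'': "\<forall>s\<in>S. c'' s \<in> F" "\<exists>s\<in>S. c'' s \<noteq> 0"
        "\<forall>t\<in>T. (\<Sum>s\<in>S. c'' s * a' s t) = 0"
        using insert.IH[OF a'F reduced True] by blast
      define c' where "c' = c''(s0 := - (q * (\<Sum>s\<in>S. c'' s * a s t0)))"
      have "(\<Sum>s\<in>S. c'' s * a s t0) \<in> F"
        using c''(1) insert.prems(1) t0(1) Fring unfolding is_subring_def
        by (intro subring_sum[OF Fring]) simp
      then have "\<forall>s\<in>insert s0 S. c' s \<in> F"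
        using c''(1) q(1) Fring insert.hyps(2) unfolding c'_def is_subring_def by auto
      moreover have "\<exists>s\<in>insert s0 S. c' s \<noteq> 0"
        using c''(2) insert.hyps(2) unfolding c'_def by force
      moreover have "\<forall>t\<in>T. (\<Sum>s\<in>insert s0 S. c' s * a s t) = 0"
        unfolding c'_def using pivot_back_substitution[where a = a and T = T, OF insert.hyps q(2)] c''(3)
        unfolding a'_def by blast
      ultimately show ?thesis by blast
    next
      case False
      then have "c s0 * a s0 t0 = 0" using insert.prems(2) t0(1) insert.hyps by (simp del: mult_eq_0_iff)
      then show ?thesis using False insert.prems(3) t0(2) by simp
    qed
  qed
qed

lemma lin_indep_overD:
  "lin_indep_over F S \<Longrightarrow> \<forall>s\<in>S. c s \<in> F \<Longrightarrow> (\<Sum>s\<in>S. c s * s) = 0 \<Longrightarrow> s \<in> S \<Longrightarrow> c s = 0"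
  unfolding lin_indep_over_def by blast

lemma lin_span_common_repr:
  assumes F: "is_subring F" and "finite S" "S \<subseteq> lin_span F X"
  shows "\<exists>T a. finite T \<and> T \<subseteq> X \<and> (\<forall>s\<in>S. \<forall>t\<in>T. a s t \<in> F)
           \<and> (\<forall>s\<in>S. (\<Sum>t\<in>T. a s t * t) = s)"
proof -
  have "\<forall>s\<in>S. \<exists>Ts b. finite Ts \<and> Ts \<subseteq> X \<and> (\<forall>t\<in>Ts. b t \<in> F) \<and> (\<Sum>t\<in>Ts. b t * t) = s"
  proof
    fix s assume "s \<in> S"
    then show "\<exists>Ts b. finite Ts \<and> Ts \<subseteq> X \<and> (\<forall>t\<in>Ts. b t \<in> F) \<and> (\<Sum>t\<in>Ts. b t * t) = s"
      using assms(3) by (intro lin_span_sum_repr[OF F]) blast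
  qed
  then obtain Ts where "\<forall>s\<in>S. \<exists>b. finite (Ts s) \<and> Ts s \<subseteq> X \<and> (\<forall>t\<in>Ts s. b t \<in> F)
      \<and> (\<Sum>t\<in>Ts s. b t * t) = s"
    by (rule bchoice[THEN exE])
  then obtain b where "\<forall>s\<in>S. finite (Ts s) \<and> Ts s \<subseteq> X \<and> (\<forall>t\<in>Ts s. b s t \<in> F)
      \<and> (\<Sum>t\<in>Ts s. b s t * t) = s"
    by (rule bchoice[THEN exE])
  then have fin: "\<forall>s\<in>S. finite (Ts s)" and sub: "\<forall>s\<in>S. Ts s \<subseteq> X"
    and bF: "\<forall>s\<in>S. \<forall>t\<in>Ts s. b s t \<in> F" and rep: "\<forall>s\<in>S. (\<Sum>t\<in>Ts s. b s t * t) = s"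
    by simp_all
  define T where "T = \<Union>(Ts ` S)"
  define a where "a s t = (if t \<in> Ts s then b s t else 0)" for s t
  have "finite T" unfolding T_def using assms(2) fin by blast
  moreover have "T \<subseteq> X" unfolding T_def using sub by blast
  moreover have "\<forall>s\<in>S. \<forall>t\<in>T. a s t \<in> F" using bF subring_zero[OF F] unfolding a_def by simp
  moreover have "(\<Sum>t\<in>T. a s t * t) = s" if "s \<in> S" for s
  proof -
    have "Ts s \<subseteq> T" unfolding T_def using that by blast
    have "(\<Sum>t\<in>T. a s t * t) = (\<Sum>t\<in>Ts s. a s t * t)"
      by (rule sum.mono_neutral_right[OF \<open>finite T\<close> \<open>Ts s \<subseteq> T\<close>]) (simp add: a_def)
    also have "\<dots> = (\<Sum>t\<in>Ts s. b s t * t)" by (rule sum.cong) (simp_all add: a_def)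
    also have "\<dots> = s" using rep that by simp
    finally show ?thesis .
  qed
  ultimately show ?thesis by (intro exI[of _ T] exI[of _ a]) simp
qed

text \<open>A K-relation among elements of A becomes, after expansion in the spanning set, a
  homogeneous system over F, which then also has a nontrivial solution in F.\<close>
lemma lin_disjoint_if_spanned_by_independent:
  fixes F K A X :: "'a::idom set"
  assumes F: "is_subfield F" and K: "is_subring K" and FK: "F \<subseteq> K"
    and A: "A \<subseteq> lin_span F X" and indep: "\<forall>T. finite T \<and> T \<subseteq> X \<longrightarrow> lin_indep_over K T"
  shows "lin_disjoint F A K"
  unfolding lin_disjoint_def
proof (intro allI impI)
  fix S assume S: "finite S \<and> S \<subseteq> A \<and> lin_indep_over F S"
  have spans: "is_subring F" "finite S" "S \<subseteq> lin_span F X"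
    using F S A unfolding is_subfield_def by blast+
  obtain T a where T: "finite T" "T \<subseteq> X" and aF: "\<forall>s\<in>S. \<forall>t\<in>T. a s t \<in> F"
    and rep: "\<forall>s\<in>S. (\<Sum>t\<in>T. a s t * t) = s"
    using lin_span_common_repr[OF spans] by (elim exE conjE) (rule that; assumption)
  have expand: "(\<Sum>s\<in>S. f s * s) = (\<Sum>t\<in>T. (\<Sum>s\<in>S. f s * a s t) * t)" for f
  proof -
    have "(\<Sum>s\<in>S. f s * s) = (\<Sum>s\<in>S. f s * (\<Sum>t\<in>T. a s t * t))"
      by (rule sum.cong) (simp_all add: rep)
    also have "\<dots> = (\<Sum>s\<in>S. \<Sum>t\<in>T. f s * a s t * t)"
      by (simp add: sum_distrib_left mult.assoc)
    also have "\<dots> = (\<Sum>t\<in>T. (\<Sum>s\<in>S. f s * a s t) * t)"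
      by (subst sum.swap) (simp add: sum_distrib_right)
    finally show ?thesis .
  qed
  show "lin_indep_over K S" unfolding lin_indep_over_def
  proof (intro allI impI ballI, rule ccontr)
    fix c s0 assume c: "(\<forall>s\<in>S. c s \<in> K) \<and> (\<Sum>s\<in>S. c s * s) = 0" and "s0 \<in> S" "c s0 \<noteq> 0"
    have coeffs_K: "\<forall>t\<in>T. (\<Sum>s\<in>S. c s * a s t) \<in> K"
    proof (intro ballI subring_sum[OF K])
      fix t s assume "t \<in> T" "s \<in> S"
      then have "c s \<in> K" "a s t \<in> K" using c aF FK by blast+
      then show "c s * a s t \<in> K" using K unfolding is_subring_def by blast
    qed
    moreover have "(\<Sum>t\<in>T. (\<Sum>s\<in>S. c s * a s t) * t) = 0" using c expand[of c] by simp
    moreover have "lin_indep_over K T" using indep T by simp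
    ultimately have sol: "\<forall>t\<in>T. (\<Sum>s\<in>S. c s * a s t) = 0"
      using lin_indep_overD[where c = "\<lambda>t. \<Sum>s\<in>S. c s * a s t"] by blast
    have "finite S" "\<exists>s\<in>S. c s \<noteq> 0" using S \<open>s0 \<in> S\<close> \<open>c s0 \<noteq> 0\<close> by blast+
    obtain c' where c': "\<forall>s\<in>S. c' s \<in> F" "\<exists>s\<in>S. c' s \<noteq> 0"
      "\<forall>t\<in>T. (\<Sum>s\<in>S. c' s * a s t) = 0"
      using homogeneous_system_solution_in_subfield[OF F \<open>finite S\<close> aF sol \<open>\<exists>s\<in>S. c s \<noteq> 0\<close>] by blast
    then have "(\<Sum>s\<in>S. c' s * s) = 0" unfolding expand by (simp add: sum.neutral)
    then have "\<forall>s\<in>S. c' s = 0" using S c'(1) lin_indep_overD[where c = c'] by blast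
    then show False using c'(2) by blast
  qed
qed

section \<open>Power products and the degree-lexicographic order\<close>

definition power_product :: "'a::comm_ring_1 list \<Rightarrow> nat list \<Rightarrow> 'a" where
  "power_product G \<alpha> = prod_list (map2 (^) G \<alpha>)"

definition exponents :: "'a list \<Rightarrow> nat list set" where
  "exponents G = {\<alpha>. length \<alpha> = length G}"

lemma power_product_add:
  "length \<alpha> = length G \<Longrightarrow> length \<beta> = length G \<Longrightarrow>
    power_product G (map2 (+) \<alpha> \<beta>) = power_product G \<alpha> * power_product G \<beta>"
proof (induction G arbitrary: \<alpha> \<beta>)
  case (Cons g G)
  then obtain a \<alpha>' b \<beta>' where "\<alpha> = a # \<alpha>'" "\<beta> = b # \<beta>'" by (cases \<alpha>; cases \<beta>) auto
  with Cons show ?case by (simp add: power_product_def power_add ac_simps)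
qed (simp add: power_product_def)

lemma power_product_zero: "power_product G (replicate (length G) 0) = 1"
  by (induction G) (simp_all add: power_product_def)

lemma generator_is_power_product: "g \<in> set G \<Longrightarrow> \<exists>\<alpha>\<in>exponents G. power_product G \<alpha> = g"
proof (induction G)
  case (Cons h G)
  show ?case
  proof (cases "g = h")
    case True
    then show ?thesis using power_product_zero[of G]
      by (intro bexI[of _ "1 # replicate (length G) 0"]) (simp_all add: power_product_def exponents_def)
  next
    case False
    then obtain \<alpha> where "\<alpha> \<in> exponents G" "power_product G \<alpha> = g" using Cons by auto
    then show ?thesis
      by (intro bexI[of _ "0 # \<alpha>"]) (simp_all add: power_product_def exponents_def)
  qed
qed simp

lemma power_product_in_ring_closure: "power_product G \<alpha> \<in> ring_closure (set G)"
proof (induction G arbitrary: \<alpha>)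
  case Nil then show ?case by (simp add: power_product_def rc_one)
next
  case (Cons g G)
  have "g ^ e \<in> ring_closure (set (g # G))" for e
    by (induction e) (simp_all add: rc_one rc_mult rc_base)
  moreover have "ring_closure (set G) \<subseteq> ring_closure (set (g # G))"
    by (rule ring_closure_mono) auto
  ultimately show ?case using Cons.IH
    by (cases \<alpha>) (auto simp: power_product_def rc_one intro: rc_mult)
qed

lemma power_products_mult_closed:
  "\<forall>x\<in>power_product G ` exponents G. \<forall>y\<in>power_product G ` exponents G.
     x * y \<in> power_product G ` exponents G"
  by (auto simp: exponents_def power_product_add[symmetric] intro!: image_eqI)

lemma ring_closure_subset_span_power_products:
  assumes F: "is_subring F"
  shows "ring_closure (F \<union> set G) \<subseteq> lin_span F (power_product G ` exponents G)"
proof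
  have one: "1 \<in> power_product G ` exponents G"
    using power_product_zero[of G] by (force simp: exponents_def)
  have F1: "1 \<in> F" and Fm: "- 1 \<in> F" using F unfolding is_subring_def by auto
  fix x assume "x \<in> ring_closure (F \<union> set G)"
  then show "x \<in> lin_span F (power_product G ` exponents G)"
  proof induction
    case (rc_base x)
    then show ?case
      using lin_span_smult[OF _ one, of x F] lin_span_base[OF F1] generator_is_power_product[of x G]
      by force
  next
    case rc_one then show ?case using lin_span_base[OF F1 one] .
  next
    case (rc_neg x) then show ?case using lin_span_scale[OF F Fm] by fastforce
  next
    case (rc_add x y) then show ?case by (simp add: lin_span_add)
  next
    case (rc_mult x y) then show ?case by (simp add: lin_span_mult[OF F power_products_mult_closed])
  qed
qed

lemma span_power_products_subset_ring_closure:
  "lin_span F (power_product G ` A) \<subseteq> ring_closure (F \<union> set G)"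
proof
  fix x assume "x \<in> lin_span F (power_product G ` A)"
  then show "x \<in> ring_closure (F \<union> set G)"
  proof induction
    case lin_span_zero
    have "1 + - 1 \<in> ring_closure (F \<union> set G)" by (intro rc_add rc_one rc_neg)
    then show ?case by simp
  next
    case (lin_span_smult c x)
    then have "x \<in> ring_closure (F \<union> set G)"
      using power_product_in_ring_closure ring_closure_mono[of "set G" "F \<union> set G"] by blast
    then show ?case using lin_span_smult(1) by (simp add: rc_base rc_mult)
  qed (rule rc_add)
qed

definition deglex_less :: "nat list \<Rightarrow> nat list \<Rightarrow> bool" where
  "deglex_less \<alpha> \<beta> \<longleftrightarrow> length \<alpha> = length \<beta> \<and>
     (sum_list \<alpha> < sum_list \<beta> \<or> sum_list \<alpha> = sum_list \<beta> \<and> ord_class.lexordp \<alpha> \<beta>)"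

lemma length_deglex_less: "deglex_less \<beta> \<alpha> \<Longrightarrow> length \<beta> = length \<alpha>"
  unfolding deglex_less_def by simp

lemma deglex_less_irrefl: "\<not> deglex_less \<alpha> \<alpha>"
  unfolding deglex_less_def by (simp add: lexordp_irreflexive)

lemma deglex_less_trans: "deglex_less \<alpha> \<beta> \<Longrightarrow> deglex_less \<beta> \<gamma> \<Longrightarrow> deglex_less \<alpha> \<gamma>"
  unfolding deglex_less_def using lexordp_trans by auto

lemma deglex_less_linear:
  "length \<alpha> = length \<beta> \<Longrightarrow> \<alpha> \<noteq> \<beta> \<Longrightarrow> deglex_less \<alpha> \<beta> \<or> deglex_less \<beta> \<alpha>"
  unfolding deglex_less_def using lexordp_linear[of \<alpha> \<beta>] by auto

lemma lexordp_add:
  "length \<alpha> = length \<gamma> \<Longrightarrow> length \<beta> = length \<gamma> \<Longrightarrow> ord_class.lexordp \<alpha> \<beta> \<Longrightarrow>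
    ord_class.lexordp (map2 (+) \<alpha> \<gamma>) (map2 (+) \<beta> (\<gamma> :: nat list))"
proof (induction \<gamma> arbitrary: \<alpha> \<beta>)
  case (Cons c \<gamma>)
  then obtain a \<alpha>' b \<beta>' where "\<alpha> = a # \<alpha>'" "\<beta> = b # \<beta>'" by (cases \<alpha>; cases \<beta>) auto
  with Cons show ?case by auto
qed simp

lemma sum_list_add: "length \<alpha> = length \<gamma> \<Longrightarrow> sum_list (map2 (+) \<alpha> \<gamma>) = sum_list \<alpha> + sum_list (\<gamma> :: nat list)"
proof (induction \<gamma> arbitrary: \<alpha>)
  case (Cons c \<gamma>)
  then obtain a \<alpha>' where "\<alpha> = a # \<alpha>'" by (cases \<alpha>) auto
  with Cons show ?case by simp
qed simp

lemma deglex_less_add: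
  "deglex_less \<beta> \<alpha> \<Longrightarrow> length \<gamma> = length \<alpha> \<Longrightarrow> deglex_less (map2 (+) \<beta> \<gamma>) (map2 (+) \<alpha> \<gamma>)"
  unfolding deglex_less_def using lexordp_add sum_list_add by auto

lemma finite_deglex_less: "finite {\<beta>. deglex_less \<beta> \<alpha>}"
proof (rule finite_subset)
  show "{\<beta>. deglex_less \<beta> \<alpha>} \<subseteq> {xs. set xs \<subseteq> {..sum_list \<alpha>} \<and> length xs = length \<alpha>}"
    unfolding deglex_less_def using member_le_sum_list by fastforce
qed (rule finite_lists_length_eq, simp)

text \<open>Counting the smaller exponent vectors turns deglex_less into the order of the natural
  numbers, which yields well-founded induction and maximal elements of finite sets.\<close>
definition deglex_rank :: "nat list \<Rightarrow> nat" where
  "deglex_rank \<alpha> = card {\<beta>. deglex_less \<beta> \<alpha>}"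

lemma deglex_rank_less: "deglex_less \<beta> \<alpha> \<Longrightarrow> deglex_rank \<beta> < deglex_rank \<alpha>"
  unfolding deglex_rank_def
proof (rule psubset_card_mono[OF finite_deglex_less])
  assume "deglex_less \<beta> \<alpha>"
  then show "{\<gamma>. deglex_less \<gamma> \<beta>} \<subset> {\<gamma>. deglex_less \<gamma> \<alpha>}"
    using deglex_less_trans deglex_less_irrefl by blast
qed

lemma deglex_induct [case_names less]:
  "(\<And>\<alpha>. (\<And>\<beta>. deglex_less \<beta> \<alpha> \<Longrightarrow> P \<beta>) \<Longrightarrow> P \<alpha>) \<Longrightarrow> P \<alpha>"
  by (induction \<alpha> rule: measure_induct_rule[of deglex_rank]) (use deglex_rank_less in blast)

lemma deglex_maximal_exists:
  assumes "finite E" "E \<noteq> {}"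
  shows "\<exists>\<alpha>\<in>E. \<forall>\<beta>\<in>E. \<not> deglex_less \<alpha> \<beta>"
proof -
  have "Max (deglex_rank ` E) \<in> deglex_rank ` E" using assms by (intro Max_in) auto
  then obtain \<alpha> where "\<alpha> \<in> E" "deglex_rank \<alpha> = Max (deglex_rank ` E)" by force
  moreover have "deglex_rank \<beta> \<le> Max (deglex_rank ` E)" if "\<beta> \<in> E" for \<beta>
    using assms(1) that by simp
  ultimately show ?thesis using deglex_rank_less leD by metis
qed

lemma list_all2_le_add_diff:
  "list_all2 (\<le>) \<beta> \<delta> \<Longrightarrow> map2 (+) \<beta> (map2 (-) \<delta> \<beta>) = (\<delta> :: nat list)"
proof (induction \<beta> arbitrary: \<delta>)
  case (Cons b \<beta>)
  then obtain d \<delta>' where "\<delta> = d # \<delta>'" by (cases \<delta>) auto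
  with Cons show ?case by auto
qed simp

lemma dickson:
  "\<forall>\<alpha>\<in>M. length \<alpha> = n \<Longrightarrow>
    \<exists>B. finite B \<and> B \<subseteq> M \<and> (\<forall>\<alpha>\<in>M. \<exists>\<beta>\<in>B. list_all2 (\<le>) \<beta> (\<alpha> :: nat list))"
proof (induction n arbitrary: M)
  case 0
  then have "M \<subseteq> {[]}" by auto
  then show ?case using finite_subset by (intro exI[of _ M]) auto
next
  case (Suc n)
  define M' where "M' = {v. \<exists>a. a # v \<in> M}"
  have "\<forall>v\<in>M'. length v = n" unfolding M'_def using Suc.prems by fastforce
  from Suc.IH[OF this] obtain B' where
    B': "finite B'" "B' \<subseteq> M'" "\<forall>v\<in>M'. \<exists>w\<in>B'. list_all2 (\<le>) w v"
    by (elim exE conjE)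
  have "\<forall>w\<in>B'. \<exists>a. a # w \<in> M" using B'(2) unfolding M'_def by blast
  then obtain f where f: "\<forall>w\<in>B'. f w # w \<in> M" by (rule bchoice[THEN exE])
  define A where "A = Max (insert 0 (f ` B'))"
  have fA: "\<forall>w\<in>B'. f w \<le> A" unfolding A_def using B'(1) by auto
  have "\<forall>a. \<exists>Ba. finite Ba \<and> Ba \<subseteq> {v. a # v \<in> M} \<and> (\<forall>v\<in>{v. a # v \<in> M}. \<exists>w\<in>Ba. list_all2 (\<le>) w v)"
  proof
    fix a
    have "\<forall>v\<in>{v. a # v \<in> M}. length v = n" using Suc.prems by fastforce
    then show "\<exists>Ba. finite Ba \<and> Ba \<subseteq> {v. a # v \<in> M} \<and> (\<forall>v\<in>{v. a # v \<in> M}. \<exists>w\<in>Ba. list_all2 (\<le>) w v)"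
      by (rule Suc.IH)
  qed
  then obtain Bs where Bs: "\<forall>a. finite (Bs a) \<and> Bs a \<subseteq> {v. a # v \<in> M}
      \<and> (\<forall>v\<in>{v. a # v \<in> M}. \<exists>w\<in>Bs a. list_all2 (\<le>) w v)"
    by (rule choice[THEN exE])
  \<comment> \<open>Elements with first entry at least A lie above one of the f w # w; each of the finitely
      many smaller first entries is handled by the induction hypothesis.\<close>
  define B where "B = (\<lambda>w. f w # w) ` B' \<union> (\<Union>a<A. (#) a ` Bs a)"
  have "finite B" unfolding B_def using B'(1) Bs by auto
  moreover have "B \<subseteq> M" unfolding B_def using f Bs by auto
  moreover have "\<exists>\<beta>\<in>B. list_all2 (\<le>) \<beta> \<alpha>" if \<alpha>: "\<alpha> \<in> M" for \<alpha>
  proof -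
    obtain a v where av: "\<alpha> = a # v" using \<alpha> Suc.prems by (cases \<alpha>) auto
    show ?thesis
    proof (cases "A \<le> a")
      case True
      have "v \<in> M'" unfolding M'_def using \<alpha> av by blast
      then obtain w where "w \<in> B'" "list_all2 (\<le>) w v" using B'(3) by blast
      then show ?thesis using fA True av unfolding B_def by (intro bexI[of _ "f w # w"]) auto
    next
      case False
      obtain w where "w \<in> Bs a" "list_all2 (\<le>) w v" using Bs \<alpha> av by blast
      then show ?thesis using False av unfolding B_def by (intro bexI[of _ "a # w"]) auto
    qed
  qed
  ultimately show ?case by blast
qed

section \<open>Standard power products\<close>

locale standard_power_products =
  fixes k :: "'a::idom set" and G :: "'a list"
  assumes subfield: "is_subfield k"
begin

lemma k_subring: "is_subring k"
  using subfield unfolding is_subfield_def by simp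

lemma one_in_k: "1 \<in> k"
  using k_subring unfolding is_subring_def by simp

text \<open>Standard exponent vectors play the role of the standard monomials of a Groebner basis
  of the ideal of relations among the generators G.\<close>
definition standard :: "nat list \<Rightarrow> bool" where
  "standard \<alpha> \<longleftrightarrow> \<alpha> \<in> exponents G \<and>
     power_product G \<alpha> \<notin> lin_span k (power_product G ` {\<beta>. deglex_less \<beta> \<alpha>})"

definition standard_basis :: "'a set" where
  "standard_basis = power_product G ` Collect standard"

lemma smaller_in_span_standard:
  "\<alpha> \<in> exponents G \<Longrightarrow>
    power_product G ` {\<beta>. deglex_less \<beta> \<alpha>}
      \<subseteq> lin_span k (power_product G ` {\<beta>. standard \<beta> \<and> deglex_less \<beta> \<alpha>})"
proof (induction \<alpha> rule: deglex_induct)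
  case (less \<alpha>)
  show ?case
  proof
    fix x assume "x \<in> power_product G ` {\<beta>. deglex_less \<beta> \<alpha>}"
    then obtain \<beta> where \<beta>: "deglex_less \<beta> \<alpha>" and x: "x = power_product G \<beta>" by blast
    have "\<beta> \<in> exponents G" using \<beta> less.prems by (simp add: exponents_def length_deglex_less)
    show "x \<in> lin_span k (power_product G ` {\<beta>. standard \<beta> \<and> deglex_less \<beta> \<alpha>})"
    proof (cases "standard \<beta>")
      case True
      then show ?thesis using \<beta> x by (intro lin_span_base[OF one_in_k]) auto
    next
      case False
      then have "x \<in> lin_span k (power_product G ` {\<gamma>. deglex_less \<gamma> \<beta>})"
        using \<open>\<beta> \<in> exponents G\<close> x unfolding standard_def by simp
      also have "\<dots> \<subseteq> lin_span k (power_product G ` {\<gamma>. standard \<gamma> \<and> deglex_less \<gamma> \<beta>})"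
        by (rule lin_span_subset[OF k_subring less.IH[OF \<beta> \<open>\<beta> \<in> exponents G\<close>]])
      also have "\<dots> \<subseteq> lin_span k (power_product G ` {\<beta>. standard \<beta> \<and> deglex_less \<beta> \<alpha>})"
        using \<beta> deglex_less_trans by (intro lin_span_mono) auto
      finally show ?thesis .
    qed
  qed
qed

lemma nonstandard_in_span_standard:
  assumes "\<alpha> \<in> exponents G" "\<not> standard \<alpha>"
  shows "power_product G \<alpha> \<in> lin_span k (power_product G ` {\<beta>. standard \<beta> \<and> deglex_less \<beta> \<alpha>})"
proof -
  have "power_product G \<alpha> \<in> lin_span k (power_product G ` {\<beta>. deglex_less \<beta> \<alpha>})"
    using assms unfolding standard_def by simp
  then show ?thesis using lin_span_subset[OF k_subring smaller_in_span_standard[OF assms(1)]] by blast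
qed

lemma power_products_in_span_standard:
  "power_product G ` exponents G \<subseteq> lin_span k standard_basis"
proof
  fix x assume "x \<in> power_product G ` exponents G"
  then obtain \<alpha> where \<alpha>: "\<alpha> \<in> exponents G" "x = power_product G \<alpha>" by blast
  show "x \<in> lin_span k standard_basis"
  proof (cases "standard \<alpha>")
    case True
    then show ?thesis using \<alpha> unfolding standard_basis_def by (intro lin_span_base[OF one_in_k]) auto
  next
    case False
    then show ?thesis using nonstandard_in_span_standard[OF \<alpha>(1)] \<alpha>(2)
      lin_span_mono[of k k "power_product G ` {\<beta>. standard \<beta> \<and> deglex_less \<beta> \<alpha>}" standard_basis]
      unfolding standard_basis_def by blast
  qed
qed

lemma standard_power_product_inj:
  assumes "standard \<alpha>" "standard \<beta>" "power_product G \<alpha> = power_product G \<beta>"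
  shows "\<alpha> = \<beta>"
proof (rule ccontr)
  assume "\<alpha> \<noteq> \<beta>"
  moreover have "length \<alpha> = length \<beta>" using assms unfolding standard_def exponents_def by simp
  ultimately have "deglex_less \<alpha> \<beta> \<or> deglex_less \<beta> \<alpha>" using deglex_less_linear by blast
  then show False
    using assms lin_span_base[OF one_in_k] unfolding standard_def by (metis imageI mem_Collect_eq)
qed

text \<open>In a nontrivial k-relation among standard power products, the deglex-largest one with a
  nonzero coefficient would be a combination of smaller ones.\<close>
lemma standard_basis_independent:
  assumes T: "finite T" "T \<subseteq> standard_basis"
  shows "lin_indep_over k T"
  unfolding lin_indep_over_def
proof (intro allI impI ballI, rule ccontr)
  fix c t assume c: "(\<forall>s\<in>T. c s \<in> k) \<and> (\<Sum>s\<in>T. c s * s) = 0" and "t \<in> T" "c t \<noteq> 0"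
  define E where "E = {\<alpha>. standard \<alpha> \<and> power_product G \<alpha> \<in> T \<and> c (power_product G \<alpha>) \<noteq> 0}"
  have "inj_on (power_product G) E" using standard_power_product_inj unfolding E_def inj_on_def by blast
  moreover have "power_product G ` E \<subseteq> T" unfolding E_def by blast
  ultimately have "finite E" using T(1) finite_imageD finite_subset by metis
  moreover have "E \<noteq> {}" using \<open>t \<in> T\<close> \<open>c t \<noteq> 0\<close> T(2) unfolding E_def standard_basis_def by blast
  ultimately obtain \<alpha> where \<alpha>: "\<alpha> \<in> E" and max: "\<forall>\<beta>\<in>E. \<not> deglex_less \<alpha> \<beta>"
    using deglex_maximal_exists by blast
  define t1 where "t1 = power_product G \<alpha>"
  define T' where "T' = {s \<in> T. c s \<noteq> 0} - {t1}"
  have smaller: "T' \<subseteq> power_product G ` {\<beta>. deglex_less \<beta> \<alpha>}"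
  proof
    fix s assume s: "s \<in> T'"
    then obtain \<beta> where \<beta>: "standard \<beta>" "s = power_product G \<beta>"
      using T(2) unfolding T'_def standard_basis_def by blast
    then have "\<beta> \<in> E" "\<beta> \<noteq> \<alpha>" using s unfolding T'_def E_def t1_def by auto
    moreover have "length \<beta> = length \<alpha>" using \<beta>(1) \<alpha> unfolding E_def standard_def exponents_def by simp
    ultimately have "deglex_less \<beta> \<alpha>" using deglex_less_linear max by blast
    then show "s \<in> power_product G ` {\<beta>. deglex_less \<beta> \<alpha>}" using \<beta>(2) by blast
  qed
  have t1: "t1 \<in> T" "c t1 \<in> k" "c t1 \<noteq> 0" using \<alpha> c unfolding E_def t1_def by auto
  then obtain d where d: "d \<in> k" "c t1 * d = 1" using subfield_inverse[OF subfield] by blast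
  have "(\<Sum>s\<in>T. c s * s) = c t1 * t1 + (\<Sum>s\<in>T'. c s * s)"
  proof -
    have "(\<Sum>s\<in>T. c s * s) = (\<Sum>s\<in>{s \<in> T. c s \<noteq> 0}. c s * s)"
      using T(1) by (intro sum.mono_neutral_right) auto
    also have "\<dots> = c t1 * t1 + (\<Sum>s\<in>T'. c s * s)"
      unfolding T'_def using T(1) t1 by (subst sum.remove) auto
    finally show ?thesis .
  qed
  then have relation: "c t1 * t1 = - (\<Sum>s\<in>T'. c s * s)"
    using c by (simp add: eq_neg_iff_add_eq_0)
  have "t1 = d * (c t1 * t1)" using d(2) by (metis mult.assoc mult.commute mult_1_left)
  also have "\<dots> = (\<Sum>s\<in>T'. (- (d * c s)) * s)"
    unfolding relation by (simp add: sum_distrib_left mult.assoc flip: sum_negf)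
  also have "\<dots> \<in> lin_span k (power_product G ` {\<beta>. deglex_less \<beta> \<alpha>})"
    using c d(1) k_subring smaller unfolding T'_def is_subring_def by (intro sum_in_lin_span) auto
  finally show False using \<alpha> unfolding E_def standard_def t1_def by blast
qed

lemma span_standard_over_subring:
  assumes F: "is_subring F"
    and cover: "\<forall>\<alpha>\<in>exponents G. \<not> standard \<alpha> \<longrightarrow> (\<exists>\<beta>\<in>B. list_all2 (\<le>) \<beta> \<alpha>)"
    and reduce: "\<forall>\<beta>\<in>B. power_product G \<beta>
                   \<in> lin_span F (power_product G ` {\<gamma>. standard \<gamma> \<and> deglex_less \<gamma> \<beta>})"
  shows "power_product G ` exponents G \<subseteq> lin_span F standard_basis"
proof -
  have F1: "1 \<in> F" using F unfolding is_subring_def by simp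
  have "power_product G \<delta> \<in> lin_span F standard_basis" if "\<delta> \<in> exponents G" for \<delta>
    using that
  proof (induction \<delta> rule: deglex_induct)
    case (less \<delta>)
    show ?case
    proof (cases "standard \<delta>")
      case True
      then show ?thesis unfolding standard_basis_def by (intro lin_span_base[OF F1]) auto
    next
      case False
      then obtain \<beta> where \<beta>: "\<beta> \<in> B" "list_all2 (\<le>) \<beta> \<delta>" using cover less.prems by blast
      define \<gamma> where "\<gamma> = map2 (-) \<delta> \<beta>"
      have lengths: "length \<beta> = length G" "length \<gamma> = length G"
        using \<beta>(2) less.prems unfolding \<gamma>_def exponents_def by (auto dest: list_all2_lengthD)
      have \<delta>: "\<delta> = map2 (+) \<beta> \<gamma>" unfolding \<gamma>_def using list_all2_le_add_diff[OF \<beta>(2)] by simp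
      have "power_product G \<delta> = power_product G \<gamma> * power_product G \<beta>"
        unfolding \<delta> using power_product_add[of \<beta> G \<gamma>] lengths by (simp add: mult.commute)
      also have "\<dots> \<in> lin_span F ((*) (power_product G \<gamma>) `
                            power_product G ` {\<gamma>. standard \<gamma> \<and> deglex_less \<gamma> \<beta>})"
        using reduce \<beta>(1) by (intro lin_span_mult_left) blast
      also have "\<dots> \<subseteq> lin_span F standard_basis"
      proof (rule lin_span_subset[OF F], safe)
        fix \<beta>' assume \<beta>': "standard \<beta>'" "deglex_less \<beta>' \<beta>"
        then have "length \<beta>' = length G" using lengths length_deglex_less by simp
        then have "power_product G \<gamma> * power_product G \<beta>' = power_product G (map2 (+) \<beta>' \<gamma>)"
          using power_product_add[of \<beta>' G \<gamma>] lengths by (simp add: mult.commute)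
        moreover have "deglex_less (map2 (+) \<beta>' \<gamma>) \<delta>"
          unfolding \<delta> using deglex_less_add \<beta>'(2) lengths by simp
        moreover have "map2 (+) \<beta>' \<gamma> \<in> exponents G"
          using \<open>length \<beta>' = length G\<close> lengths by (simp add: exponents_def)
        ultimately show "power_product G \<gamma> * power_product G \<beta>' \<in> lin_span F standard_basis"
          using less.IH by simp
      qed
      finally show ?thesis .
    qed
  qed
  then show ?thesis by blast
qed

text \<open>By Dickson's lemma the nonstandard exponents are generated, under adding exponents,
  by finitely many of them; the coefficients in k expressing those finitely many power products
  through standard ones suffice to express all power products.\<close>
lemma finitely_many_coefficients_suffice:
  "\<exists>C. finite C \<and> C \<subseteq> k \<and>
     (\<forall>F. is_subring F \<and> C \<subseteq> F \<longrightarrow> power_product G ` exponents G \<subseteq> lin_span F standard_basis)"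
proof -
  define N where "N = {\<alpha>\<in>exponents G. \<not> standard \<alpha>}"
  obtain B where B: "finite B" "B \<subseteq> N" and cover: "\<forall>\<alpha>\<in>N. \<exists>\<beta>\<in>B. list_all2 (\<le>) \<beta> \<alpha>"
    using dickson[of N "length G"] unfolding N_def exponents_def by auto
  have "\<forall>\<beta>\<in>B. power_product G \<beta> \<in> lin_span k (power_product G ` {\<gamma>. standard \<gamma> \<and> deglex_less \<gamma> \<beta>})"
    using B(2) nonstandard_in_span_standard unfolding N_def by blast
  from lin_span_finite_coeffs[OF B(1) this] obtain C where C: "finite C" "C \<subseteq> k" and reduce:
    "\<forall>\<beta>\<in>B. power_product G \<beta> \<in> lin_span C (power_product G ` {\<gamma>. standard \<gamma> \<and> deglex_less \<gamma> \<beta>})"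
    by (elim exE conjE)
  have "power_product G ` exponents G \<subseteq> lin_span F standard_basis" if F: "is_subring F" "C \<subseteq> F" for F
  proof (rule span_standard_over_subring[OF F(1)])
    show "\<forall>\<alpha>\<in>exponents G. \<not> standard \<alpha> \<longrightarrow> (\<exists>\<beta>\<in>B. list_all2 (\<le>) \<beta> \<alpha>)"
      using cover unfolding N_def by blast
    show "\<forall>\<beta>\<in>B. power_product G \<beta> \<in> lin_span F (power_product G ` {\<gamma>. standard \<gamma> \<and> deglex_less \<gamma> \<beta>})"
      using reduce lin_span_mono[OF F(2) order_refl] by blast
  qed
  then show ?thesis using C by blast
qed

end

section \<open>Descent to a finitely generated field\<close>

lemma lin_disjoint_subset: "lin_disjoint k0 A K \<Longrightarrow> A' \<subseteq> A \<Longrightarrow> lin_disjoint k0 A' K"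
  unfolding lin_disjoint_def by blast

lemma base_change_ring_closure:
  assumes "k0 \<subseteq> k" "lin_disjoint k0 (ring_closure (k0 \<union> X)) k"
  shows "base_change k0 (ring_closure (k0 \<union> X)) k (ring_closure (k \<union> X))"
  unfolding base_change_def
proof (intro conjI)
  show "k0 \<subseteq> ring_closure (k0 \<union> X)" by (blast intro: rc_base)
  have "ring_closure (k0 \<union> X) \<subseteq> ring_closure (k \<union> X)" using assms(1) by (intro ring_closure_mono) blast
  then have "ring_closure (ring_closure (k0 \<union> X) \<union> k) \<subseteq> ring_closure (k \<union> X)"
    by (intro ring_closure_least[OF ring_closure_subring]) (blast intro: rc_base)
  moreover have "ring_closure (k \<union> X) \<subseteq> ring_closure (ring_closure (k0 \<union> X) \<union> k)"
    by (intro ring_closure_mono) (blast intro: rc_base)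
  ultimately show "ring_closure (k \<union> X) = ring_closure (ring_closure (k0 \<union> X) \<union> k)" by blast
qed (use assms in auto)

lemma locally_nilpotent_on_base_change:
  assumes "base_change k0 A k C" "is_derivation D" "\<forall>x\<in>k. D x = 0"
  shows "locally_nilpotent_on A D \<longleftrightarrow> locally_nilpotent_on C D"
proof
  assume "locally_nilpotent_on A D"
  then show "locally_nilpotent_on C D"
    using locally_nilpotent_on_ring_closure[OF assms(2,3)] assms(1) unfolding base_change_def by simp
next
  have "A \<subseteq> C" using assms(1) unfolding base_change_def by (blast intro: rc_base)
  then show "locally_nilpotent_on C D \<Longrightarrow> locally_nilpotent_on A D"
    unfolding locally_nilpotent_on_def by blast
qed

lemma finitely_generated_algebra_descends:
  fixes k :: "'a::idom set"
  assumes k: "is_subfield k" and gen: "ring_closure (k \<union> set G) = UNIV" and E: "finite E"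
  shows "\<exists>C. finite C \<and> C \<subseteq> k \<and> (\<forall>k0. is_subfield k0 \<and> C \<subseteq> k0 \<and> k0 \<subseteq> k \<longrightarrow>
           E \<subseteq> ring_closure (k0 \<union> set G) \<and> lin_disjoint k0 (ring_closure (k0 \<union> set G)) k)"
proof -
  interpret standard_power_products k G by unfold_locales (rule k)
  obtain C1 where C1: "finite C1" "C1 \<subseteq> k" and span_C1:
    "\<forall>F. is_subring F \<and> C1 \<subseteq> F \<longrightarrow> power_product G ` exponents G \<subseteq> lin_span F standard_basis"
    using finitely_many_coefficients_suffice by blast
  have "UNIV \<subseteq> lin_span k standard_basis"
    using gen ring_closure_subset_span_power_products[OF k_subring, of G]
      lin_span_subset[OF k_subring power_products_in_span_standard] by blast
  then have "\<forall>x\<in>E. id x \<in> lin_span k ((\<lambda>_. standard_basis) x)" by auto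
  from lin_span_finite_coeffs[OF E this] obtain C2 where C2: "finite C2" "C2 \<subseteq> k"
    and span_C2: "E \<subseteq> lin_span C2 standard_basis" by auto
  have "E \<subseteq> ring_closure (k0 \<union> set G) \<and> lin_disjoint k0 (ring_closure (k0 \<union> set G)) k"
    if k0: "is_subfield k0" "C1 \<union> C2 \<subseteq> k0" "k0 \<subseteq> k" for k0
  proof
    have k0_ring: "is_subring k0" using k0(1) unfolding is_subfield_def by simp
    have span_subset: "lin_span k0 standard_basis \<subseteq> ring_closure (k0 \<union> set G)"
      unfolding standard_basis_def by (rule span_power_products_subset_ring_closure)
    show "E \<subseteq> ring_closure (k0 \<union> set G)"
      using span_C2 lin_span_mono[of C2 k0 standard_basis standard_basis] k0(2) span_subset by blast
    have "ring_closure (k0 \<union> set G) \<subseteq> lin_span k0 standard_basis"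
      using ring_closure_subset_span_power_products[OF k0_ring, of G]
        lin_span_subset[OF k0_ring] span_C1 k0_ring k0(2) by blast
    then show "lin_disjoint k0 (ring_closure (k0 \<union> set G)) k"
      using lin_disjoint_if_spanned_by_independent[OF k0(1) k_subring k0(3)] standard_basis_independent
      by blast
  qed
  then show ?thesis using C1 C2 by (intro exI[of _ "C1 \<union> C2"]) auto
qed

theorem lemma1p2:
  fixes k R :: "'b::{idom,ring_char_0} set" and D :: "'b \<Rightarrow> 'b"
  assumes k_ac: "alg_closed_subfield k"
    and kR: "k \<subseteq> R"
    and R_fg: "fin_gen_algebra k R"
    and B_fg: "fin_gen_algebra k (UNIV :: 'b set)"
    and gen_fibers: "\<exists>g\<in>R. g \<noteq> 0 \<and> (\<forall>m. maximal_ideal_of R m \<and> g \<notin> m \<longrightarrow> fiber_integral m)"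
    and D_der: "is_derivation D"
    and D_Rtriv: "\<forall>r\<in>R. D r = 0"
    and D_fibers: "\<forall>m. maximal_ideal_of R m \<longrightarrow> fiber_LND D m"
  shows "\<exists>k0 B0 R0. fin_gen_field_over_Q k0 \<and> k0 \<subseteq> k
           \<and> fin_gen_algebra k0 B0 \<and> fin_gen_algebra k0 R0 \<and> R0 \<subseteq> B0
           \<and> base_change k0 B0 k UNIV \<and> base_change k0 R0 k R
           \<and> D ` B0 \<subseteq> B0 \<and> (\<forall>r\<in>R0. D r = 0)
           \<and> (locally_nilpotent_on B0 D \<longleftrightarrow> locally_nilpotent_on UNIV D)"
proof -
  have k: "is_subfield k" using k_ac unfolding alg_closed_subfield_def by blast
  obtain G where G: "ring_closure (k \<union> set G) = UNIV"
    using B_fg finite_list unfolding fin_gen_algebra_def by metis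
  obtain H where H: "finite H" "ring_closure (k \<union> H) = R"
    using R_fg unfolding fin_gen_algebra_def by metis
  have "finite (D ` set G \<union> H)" using H(1) by simp
  from finitely_generated_algebra_descends[OF k G this] obtain C where C: "finite C" "C \<subseteq> k"
    and descent: "\<forall>k0. is_subfield k0 \<and> C \<subseteq> k0 \<and> k0 \<subseteq> k \<longrightarrow>
      D ` set G \<union> H \<subseteq> ring_closure (k0 \<union> set G) \<and> lin_disjoint k0 (ring_closure (k0 \<union> set G)) k"
    by (elim exE conjE)
  define k0 where "k0 = field_closure C"
  define B0 where "B0 = ring_closure (k0 \<union> set G)"
  define R0 where "R0 = ring_closure (k0 \<union> H)"
  have k0: "is_subfield k0" "k0 \<subseteq> k" "fin_gen_field_over_Q k0"
    using field_closure_subfield[OF k C(2)] field_closure_least[OF k C(2)] C(1)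
    unfolding k0_def fin_gen_field_over_Q_def by blast+
  have E: "D ` set G \<union> H \<subseteq> B0" and disj: "lin_disjoint k0 B0 k"
    using descent k0(1,2) unfolding B0_def k0_def by (auto intro: fc_base)
  have R0: "R0 \<subseteq> B0" "R0 \<subseteq> R"
    using E ring_closure_mono[of "k0 \<union> H" "k \<union> H"] k0(2) H(2) unfolding R0_def
    by (auto intro!: ring_closure_least[OF ring_closure_subring] simp: B0_def intro: rc_base)
  have bc_B: "base_change k0 B0 k UNIV" and bc_R: "base_change k0 R0 k R"
    using base_change_ring_closure[OF k0(2)] disj lin_disjoint_subset[OF disj R0(1)] G H(2)
    unfolding B0_def R0_def by (metis, metis)
  have "\<forall>x\<in>k0. D x = 0" using k0(2) kR D_Rtriv by blast
  then have "D ` B0 \<subseteq> B0"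
    using E subring_zero[OF ring_closure_subring] unfolding B0_def
    by (intro derivation_image_ring_closure[OF D_der ring_closure_subring]) (auto intro: rc_base)
  moreover have "fin_gen_algebra k0 B0" "fin_gen_algebra k0 R0"
    unfolding fin_gen_algebra_def B0_def R0_def using H(1) by blast+
  moreover have "\<forall>r\<in>R0. D r = 0" using R0(2) D_Rtriv by blast
  moreover have "locally_nilpotent_on B0 D \<longleftrightarrow> locally_nilpotent_on UNIV D"
    using locally_nilpotent_on_base_change[OF bc_B D_der] kR D_Rtriv by blast
  ultimately show ?thesis
    using k0(2,3) bc_B bc_R R0(1) by (intro exI[of _ k0] exI[of _ B0] exI[of _ R0] conjI) assumption+
qed

end
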